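(* Assume $\kappa=\kappa^{<\kappa}$. For every point $x$ of $S_\kappa$, the subspace $S_\kappa\setminus\{x\}$ is not $C^*$-embedded in $S_\kappa$, i.e. there is a bounded continuous real-valued function on $S_\kappa\setminus\{x\}$ that has no continuous extension to $S_\kappa$.
   Context: A space is zero-dimensional if it has a base of clopen sets. For a zero-dimensional space $X$ and an open $U\subseteq X$, the ($X$-)type $\tau(U)$ is the least cardinal $\tau$ such that $U$ is a union of $\tau$ many clopen subsets of $X$. A zero-dimensional space is an $F_\kappa$-space if every open subset of type less than $\kappa$ is $C^*$-embedded (every bounded continuous real-valued function on it extends continuously to the whole space). A space is a $G_\kappa$-space if every non-empty intersection of fewer than $\kappa$ open sets has non-empty interior. A $\kappa$-Parovičenko space is a compact Hausdorff zero-dimensional $F_\kappa$- and $G_\kappa$-space without isolated points (no weight restriction is imposed). If $\kappa=\kappa^{<\kappa}$ there is, up to homeomorphism, a unique $\kappa$-Parovičenko space of weight $\kappa$; it is denoted $S_\kappa$. *)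

theory Defs
  imports "HOL-Analysis.Analysis"
begin

unbundle cardinal_syntax

text \<open>Cardinals are represented by sets: the cardinal kappa is the cardinality
  of a carrier set K; comparisons use the library's ordLeq / ordLess on card_of.\<close>

text \<open>kappa = kappa^(<kappa): for every cardinal lambda < kappa (represented by
  a subset of K of smaller cardinality), kappa^lambda <= kappa.\<close>
definition kappa_eq_kappa_lt_kappa :: "'k set \<Rightarrow> bool" where
  "kappa_eq_kappa_lt_kappa K \<longleftrightarrow>
     (\<forall>A. A \<subseteq> K \<and> (card_of A) <o (card_of K) \<longrightarrow> (card_of (Func A K)) \<le>o (card_of K))"

definition clopenin :: "'a topology \<Rightarrow> 'a set \<Rightarrow> bool" where
  "clopenin X C \<longleftrightarrow> closedin X C \<and> openin X C"

definition zero_dim :: "'a topology \<Rightarrow> bool" where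
  "zero_dim X \<longleftrightarrow>
     (\<forall>U x. openin X U \<and> x \<in> U \<longrightarrow> (\<exists>C. clopenin X C \<and> x \<in> C \<and> C \<subseteq> U))"

definition Cstar_embedded :: "'a topology \<Rightarrow> 'a set \<Rightarrow> bool" where
  "Cstar_embedded X S \<longleftrightarrow>
     (\<forall>f. continuous_map (subtopology X S) euclideanreal f \<and> bounded (f ` S) \<longrightarrow>
        (\<exists>g. continuous_map X euclideanreal g \<and> (\<forall>x\<in>S. g x = f x)))"

definition type_less :: "'a topology \<Rightarrow> 'a set \<Rightarrow> 'k set \<Rightarrow> bool" where
  "type_less X U K \<longleftrightarrow>
     (\<exists>\<C>. (\<forall>C\<in>\<C>. clopenin X C) \<and> \<Union>\<C> = U \<and> (card_of \<C>) <o (card_of K))"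

definition F_kappa_space :: "'a topology \<Rightarrow> 'k set \<Rightarrow> bool" where
  "F_kappa_space X K \<longleftrightarrow> zero_dim X \<and>
     (\<forall>U. openin X U \<and> type_less X U K \<longrightarrow> Cstar_embedded X U)"

definition G_kappa_space :: "'a topology \<Rightarrow> 'k set \<Rightarrow> bool" where
  "G_kappa_space X K \<longleftrightarrow>
     (\<forall>\<U>. (\<forall>U\<in>\<U>. openin X U) \<and> (card_of \<U>) <o (card_of K) \<and> topspace X \<inter> \<Inter>\<U> \<noteq> {} \<longrightarrow>
        X interior_of (topspace X \<inter> \<Inter>\<U>) \<noteq> {})"

definition kappa_Parovicenko :: "'a topology \<Rightarrow> 'k set \<Rightarrow> bool" where
  "kappa_Parovicenko X K \<longleftrightarrow>
     compact_space X \<and> Hausdorff_space X \<and> zero_dim X \<and>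
     F_kappa_space X K \<and> G_kappa_space X K \<and>
     (\<forall>x\<in>topspace X. \<not> openin X {x})"

definition is_base_of :: "'a topology \<Rightarrow> 'a set set \<Rightarrow> bool" where
  "is_base_of X \<B> \<longleftrightarrow> (\<forall>B\<in>\<B>. openin X B) \<and>
     (\<forall>U. openin X U \<longrightarrow> (\<exists>\<V>. \<V> \<subseteq> \<B> \<and> \<Union>\<V> = U))"

definition has_weight :: "'a topology \<Rightarrow> 'k set \<Rightarrow> bool" where
  "has_weight X K \<longleftrightarrow> (\<exists>\<B>. is_base_of X \<B> \<and> (card_of \<B>) =o (card_of K)) \<and>
     (\<forall>\<B>. is_base_of X \<B> \<longrightarrow> (card_of K) \<le>o (card_of \<B>))"

end

theory Submission
  imports Defs
begin

unbundle cardinal_syntax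

(* Fix x in X and let (B a), a in K, be a local base of clopen
   neighbourhoods of x indexed by the weight kappa = |K|.  Along the canonical
   well-order of K we choose by transfinite recursion, for every a, two disjoint
   nonempty clopen sets P a, Q a inside B a - {x} and inside all earlier shrunken
   neighbourhoods C b = B b - (P b \<union> Q b), together with a continuous function
   h a : X -> [0,1] that is 0 on P a, 1 on Q a and agrees with every earlier h b
   outside C b.  The F_kappa property extends the fewer than kappa earlier functions
   to all of X, and the G_kappa property makes the intersection of fewer than kappa
   neighbourhoods of x have nonempty interior, which leaves room for P a and Q a.
   The compatible family (h a) pastes to a bounded continuous function on X - {x};
   a continuous extension g to X would satisfy |g x| < 1/2 and |g x - 1| < 1/2,
   since every B a meets both a 0-set P a and a 1-set Q a of g. *)

lemma clopenin_topspace: "clopenin X (topspace X)"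
  unfolding clopenin_def by auto

lemma clopenin_diff: "clopenin X A \<Longrightarrow> clopenin X B \<Longrightarrow> clopenin X (A - B)"
  unfolding clopenin_def by (auto intro: closedin_diff openin_diff)

lemma clopenin_Un: "clopenin X A \<Longrightarrow> clopenin X B \<Longrightarrow> clopenin X (A \<union> B)"
  unfolding clopenin_def by auto

lemma openin_complement_clopen: "clopenin X C \<Longrightarrow> openin X (topspace X - C)"
  unfolding clopenin_def by (simp add: openin_diff)

lemma continuous_map_if_clopen:
  assumes P: "clopenin X P"
    and f: "continuous_map X Y f" and g: "continuous_map X Y g"
  shows "continuous_map X Y (\<lambda>y. if y \<in> P then f y else g y)"
proof (rule continuous_map_cases_alt)
  have "P \<subseteq> topspace X"
    using P unfolding clopenin_def by (simp add: closedin_subset)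
  then have "X frontier_of {y \<in> topspace X. y \<in> P} = {}"
    using P unfolding clopenin_def by (simp add: frontier_of_eq_empty Int_absorb1 Collect_conj_eq)
  then show "\<And>y. y \<in> X frontier_of {y \<in> topspace X. y \<in> P} \<Longrightarrow> f y = g y"
    by blast
qed (use f g continuous_map_from_subtopology in auto)

lemma card_of_insert_ordLess:
  assumes "infinite K" and "|A| <o |K|"
  shows "|insert z A| <o |K|"
proof -
  have "|{z}| <o |K|"
    using assms(1) by (meson card_of_Well_order card_of_ordLeq_finite finite.emptyI
        finite.insertI not_ordLeq_iff_ordLess)
  then have "|{z} \<union> A| <o |K|"
    using card_of_Un_ordLess_infinite assms by blast
  then show ?thesis by simp
qed

lemma two_points_in_open:
  assumes noiso: "\<forall>y\<in>topspace X. \<not> openin X {y}"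
    and W: "openin X W" "W \<noteq> {}"
  obtains y z where "y \<in> W" "z \<in> W" "y \<noteq> z"
proof -
  obtain y where y: "y \<in> W" using W(2) by blast
  then have "W \<noteq> {y}"
    using noiso W(1) openin_subset by blast
  then show ?thesis using y that by blast
qed

lemma disjoint_clopens_in_open:
  assumes zd: "zero_dim X" and Hs: "Hausdorff_space X"
    and noiso: "\<forall>y\<in>topspace X. \<not> openin X {y}"
    and x: "x \<in> topspace X" and W: "openin X W" "W \<noteq> {}"
  obtains P Q where "clopenin X P" "clopenin X Q" "P \<noteq> {}" "Q \<noteq> {}" "P \<inter> Q = {}"
    "P \<subseteq> W - {x}" "Q \<subseteq> W - {x}"
proof -
  have W': "openin X (W - {x})"
    using W(1) closedin_t1_singleton[OF Hausdorff_imp_t1_space[OF Hs] x] by blast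
  obtain u v where "u \<in> W" "v \<in> W" "u \<noteq> v"
    using two_points_in_open[OF noiso W] .
  then have "W - {x} \<noteq> {}" by blast
  then obtain y z where yz: "y \<in> W - {x}" "z \<in> W - {x}" "y \<noteq> z"
    using two_points_in_open[OF noiso W'] by blast
  then obtain U V where UV: "openin X U" "openin X V" "y \<in> U" "z \<in> V" "disjnt U V"
    using Hs W' openin_subset unfolding Hausdorff_space_def by (metis subsetD)
  obtain P where P: "clopenin X P" "y \<in> P" "P \<subseteq> U \<inter> (W - {x})"
    using zd UV(1,3) yz(1) W' unfolding zero_dim_def by (meson IntI openin_Int)
  obtain Q where Q: "clopenin X Q" "z \<in> Q" "Q \<subseteq> V \<inter> (W - {x})"
    using zd UV(2,4) yz(2) W' unfolding zero_dim_def by (meson IntI openin_Int)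
  have "P \<inter> Q = {}"
    using P(3) Q(3) UV(5) unfolding disjnt_def by blast
  with P Q show ?thesis using that by blast
qed

lemma pasting_unit_valued:
  assumes op: "\<And>j. j \<in> J \<Longrightarrow> openin X (W j)"
    and cont: "\<And>j. j \<in> J \<Longrightarrow> continuous_map X euclideanreal (g j)"
    and unit: "\<And>j y. j \<in> J \<Longrightarrow> y \<in> W j \<Longrightarrow> g j y \<in> {0..1}"
    and agree: "\<And>i j y. i \<in> J \<Longrightarrow> j \<in> J \<Longrightarrow> y \<in> W i \<Longrightarrow> y \<in> W j \<Longrightarrow> g i y = g j y"
  obtains f where "continuous_map (subtopology X (\<Union>j\<in>J. W j)) euclideanreal f"
    "f ` (\<Union>j\<in>J. W j) \<subseteq> {0..1}" "\<forall>j\<in>J. \<forall>y\<in>W j. f y = g j y"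
proof -
  let ?S = "\<Union>j\<in>J. W j"
  have cover: "topspace (subtopology X ?S) \<subseteq> ?S"
    by simp
  have sub_open: "openin (subtopology X ?S) (W j)" if "j \<in> J" for j
    using op[OF that] that by (auto simp: openin_subtopology intro!: exI[of _ "W j"])
  have sub_cont: "continuous_map (subtopology (subtopology X ?S) (W j)) euclideanreal (g j)"
    if "j \<in> J" for j
    using cont[OF that] continuous_map_from_subtopology by blast
  have sub_agree: "g i y = g j y"
    if "i \<in> J" "j \<in> J" "y \<in> topspace (subtopology X ?S) \<inter> W i \<inter> W j" for i j y
    using agree that by blast
  obtain f where f: "continuous_map (subtopology X ?S) euclideanreal f"
    and feq: "\<And>y j. j \<in> J \<Longrightarrow> y \<in> topspace (subtopology X ?S) \<inter> W j \<Longrightarrow> f y = g j y"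
    using pasting_lemma_exists[OF cover sub_open sub_cont sub_agree] by blast
  have feq': "f y = g j y" if "j \<in> J" "y \<in> W j" for j y
    using feq[OF that(1)] that openin_subset[OF op[OF that(1)]] by auto
  have range: "f ` ?S \<subseteq> {0..1}"
    using feq' unit by fastforce
  have "\<forall>j\<in>J. \<forall>y\<in>W j. f y = g j y"
    using feq' by blast
  with f range show ?thesis
    by (rule that)
qed

lemma F_kappa_extend_compatible:
  assumes F: "F_kappa_space X K" and J: "|J| <o |K|"
    and clopen: "\<And>j. j \<in> J \<Longrightarrow> clopenin X (C j)"
    and cont: "\<And>j. j \<in> J \<Longrightarrow> continuous_map X euclideanreal (g j)"
    and unit: "\<And>j y. j \<in> J \<Longrightarrow> g j y \<in> {0..1}"
    and agree: "\<And>i j y. i \<in> J \<Longrightarrow> j \<in> J \<Longrightarrow> y \<in> topspace X - C i \<Longrightarrow>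
                  y \<in> topspace X - C j \<Longrightarrow> g i y = g j y"
  obtains e where "continuous_map X euclideanreal e"
    "\<forall>j\<in>J. \<forall>y\<in>topspace X - C j. e y = g j y"
proof -
  let ?W = "\<Union>j\<in>J. topspace X - C j"
  have op: "openin X (topspace X - C j)" if "j \<in> J" for j
    using clopen[OF that] by (rule openin_complement_clopen)
  obtain f where f: "continuous_map (subtopology X ?W) euclideanreal f"
    and fW: "f ` ?W \<subseteq> {0..1}" and feq: "\<forall>j\<in>J. \<forall>y\<in>topspace X - C j. f y = g j y"
    using op cont unit agree by (rule pasting_unit_valued)
  have "type_less X ?W K"
    unfolding type_less_def
  proof (intro exI conjI)
    show "\<forall>D\<in>(\<lambda>j. topspace X - C j) ` J. clopenin X D"
      using clopen clopenin_diff clopenin_topspace by blast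
    show "\<Union> ((\<lambda>j. topspace X - C j) ` J) = ?W" ..
    show "|(\<lambda>j. topspace X - C j) ` J| <o |K|"
      using card_of_image J by (rule ordLeq_ordLess_trans)
  qed
  moreover have "openin X ?W"
    using op by (intro openin_Union) blast
  ultimately have embedded: "Cstar_embedded X ?W"
    using F unfolding F_kappa_space_def by blast
  have "bounded (f ` ?W)"
    using bounded_subset[OF bounded_closed_interval fW] .
  then obtain e where e: "continuous_map X euclideanreal e"
    and eW: "\<And>y. y \<in> ?W \<Longrightarrow> e y = f y"
    using embedded[unfolded Cstar_embedded_def, rule_format, OF conjI[OF f]] by blast
  have "\<forall>j\<in>J. \<forall>y\<in>topspace X - C j. e y = g j y"
  proof (intro ballI)
    fix j y assume j: "j \<in> J" and y: "y \<in> topspace X - C j"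
    then have "y \<in> ?W"
      by (rule UN_I)
    then show "e y = g j y"
      using eW feq j y by simp
  qed
  with e show ?thesis
    by (rule that)
qed

definition separation_stage ::
  "'a topology \<Rightarrow> 'a \<Rightarrow> 'j set \<Rightarrow> ('j \<Rightarrow> 'a set) \<Rightarrow> ('j \<Rightarrow> 'a \<Rightarrow> real) \<Rightarrow>
    'a set \<Rightarrow> 'a set \<Rightarrow> 'a set \<Rightarrow> ('a \<Rightarrow> real) \<Rightarrow> bool" where
  "separation_stage X x J C g B P Q h \<longleftrightarrow>
     clopenin X P \<and> clopenin X Q \<and> P \<noteq> {} \<and> Q \<noteq> {} \<and> P \<inter> Q = {} \<and>
     P \<union> Q \<subseteq> B - {x} \<and> (\<forall>j\<in>J. P \<union> Q \<subseteq> C j) \<and>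
     continuous_map X euclideanreal h \<and> (\<forall>y. h y \<in> {0..1}) \<and>
     (\<forall>y\<in>P. h y = 0) \<and> (\<forall>y\<in>Q. h y = 1) \<and>
     (\<forall>j\<in>J. \<forall>y\<in>topspace X - C j. h y = g j y)"

lemma separation_stage_cong:
  assumes "\<forall>j\<in>J. C j = C' j \<and> g j = g' j"
  shows "separation_stage X x J C g B P Q h = separation_stage X x J C' g' B P Q h"
  using assms unfolding separation_stage_def by auto

lemma separation_stage_shrunk:
  assumes "separation_stage X x J C g B P Q h" and "clopenin X B" and "x \<in> B"
  shows "clopenin X (B - (P \<union> Q)) \<and> x \<in> B - (P \<union> Q)"
proof -
  have "clopenin X P" "clopenin X Q" "x \<notin> P \<union> Q"
    using assms(1) unfolding separation_stage_def by auto
  then show ?thesis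
    using assms(2,3) by (simp add: clopenin_diff clopenin_Un)
qed

text \<open>Stages can always be built: the F_kappa property extends the earlier functions,
  and the G_kappa property yields a nonempty open set inside B and all C j.\<close>

lemma separation_stage_exists:
  assumes infK: "infinite K" and zd: "zero_dim X" and Hs: "Hausdorff_space X"
    and noiso: "\<forall>y\<in>topspace X. \<not> openin X {y}"
    and F: "F_kappa_space X K" and G: "G_kappa_space X K" and x: "x \<in> topspace X"
    and J: "|J| <o |K|" and B: "clopenin X B" "x \<in> B"
    and C: "\<And>j. j \<in> J \<Longrightarrow> clopenin X (C j) \<and> x \<in> C j"
    and cont: "\<And>j. j \<in> J \<Longrightarrow> continuous_map X euclideanreal (g j)"
    and unit: "\<And>j y. j \<in> J \<Longrightarrow> g j y \<in> {0..1}"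
    and agree: "\<And>i j y. i \<in> J \<Longrightarrow> j \<in> J \<Longrightarrow> y \<in> topspace X - C i \<Longrightarrow>
                  y \<in> topspace X - C j \<Longrightarrow> g i y = g j y"
  shows "\<exists>P Q h. separation_stage X x J C g B P Q h"
proof -
  have clopenC: "\<And>j. j \<in> J \<Longrightarrow> clopenin X (C j)"
    using C by simp
  obtain e where e: "continuous_map X euclideanreal e"
    and eeq: "\<forall>j\<in>J. \<forall>y\<in>topspace X - C j. e y = g j y"
    using F J clopenC cont unit agree by (rule F_kappa_extend_compatible)
  define \<U> where "\<U> = insert B (C ` J)"
  define N where "N = X interior_of (topspace X \<inter> \<Inter>\<U>)"
  have "|\<U>| <o |K|"
    unfolding \<U>_def
    using card_of_insert_ordLess[OF infK ordLeq_ordLess_trans[OF card_of_image J]] .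
  moreover have "\<forall>U\<in>\<U>. openin X U" and "x \<in> topspace X \<inter> \<Inter>\<U>"
    using B C x unfolding \<U>_def clopenin_def by auto
  ultimately have N_nonempty: "N \<noteq> {}"
    using G unfolding G_kappa_space_def N_def by blast
  have N_open: "openin X N"
    unfolding N_def by simp
  obtain P Q where P: "clopenin X P" and Q: "clopenin X Q" and PQ: "P \<noteq> {}" "Q \<noteq> {}"
    "P \<inter> Q = {}" "P \<subseteq> N - {x}" "Q \<subseteq> N - {x}"
    by (rule disjoint_clopens_in_open[OF zd Hs noiso x N_open N_nonempty])
  have inside: "P \<union> Q \<subseteq> (B \<inter> (\<Inter>j\<in>J. C j)) - {x}"
    using PQ(4,5) interior_of_subset[of X "topspace X \<inter> \<Inter>\<U>"] unfolding N_def \<U>_def by auto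
  define h where "h y = (if y \<in> P then 0 else if y \<in> Q then 1 else max 0 (min 1 (e y)))" for y
  have "continuous_map X euclideanreal h"
    unfolding h_def
    by (intro continuous_map_if_clopen[OF P] continuous_map_if_clopen[OF Q] continuous_intros e)
  moreover have "h y = g j y" if "j \<in> J" "y \<in> topspace X - C j" for j y
    using that inside eeq unit[OF that(1), of y] unfolding h_def by auto
  ultimately have "separation_stage X x J C g B P Q h"
    using P Q PQ(1-3) inside unfolding separation_stage_def h_def by auto
  then show ?thesis by blast
qed

lemma wellorder_dependent_choice:
  fixes r :: "'k rel" and R :: "'k \<Rightarrow> ('k \<Rightarrow> 't) \<Rightarrow> 't \<Rightarrow> bool"
  assumes wo: "Well_order r"
    and earlier: "\<And>a T T'. \<forall>b\<in>underS r a. T b = T' b \<Longrightarrow> R a T = R a T'"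
    and step: "\<And>a T. a \<in> Field r \<Longrightarrow> \<forall>b\<in>underS r a. R b T (T b) \<Longrightarrow> \<exists>t. R a T t"
  shows "\<exists>T. \<forall>a\<in>Field r. R a T (T a)"
proof -
  interpret wo_rel r using wo by (simp add: wo_rel_def)
  define H where "H T a = (SOME t. R a T t)" for T a
  have "adm_wo H"
    unfolding adm_wo_def H_def using earlier by metis
  then have "worec H a = H (worec H) a" for a
    by (metis worec_fixpoint)
  then have worec_eq: "worec H a = (SOME t. R a (worec H) t)" for a
    unfolding H_def .
  have "a \<in> Field r \<longrightarrow> R a (worec H) (worec H a)" for a
  proof (induction a rule: well_order_induct)
    case (1 a)
    show ?case
    proof
      assume a: "a \<in> Field r"
      have "\<forall>b\<in>underS a. R b (worec H) (worec H b)"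
      proof
        fix b assume "b \<in> underS a"
        then have "b \<noteq> a \<and> (b, a) \<in> r" and "b \<in> Field r"
          by (auto simp: underS_def Field_def)
        then show "R b (worec H) (worec H b)"
          using 1 by simp
      qed
      then have "\<exists>t. R a (worec H) t"
        by (rule step[OF a])
      then show "R a (worec H) (worec H a)"
        unfolding worec_eq[of a] by (rule someI_ex)
    qed
  qed
  then show ?thesis by blast
qed

text \<open>Functions of stages along a well-order agree outside both shrunken
  neighbourhoods: the later stage was built to agree with the earlier one there.\<close>

lemma separation_stages_agree:
  assumes wo: "Well_order r" and ij: "i \<in> Field r" "j \<in> Field r"
    and stage: "\<And>a. a \<in> {i, j} \<Longrightarrow>
                  separation_stage X x (underS r a) C g (B a) (P a) (Q a) (g a)"
    and y: "y \<in> topspace X - C i" "y \<in> topspace X - C j"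
  shows "g i y = g j y"
proof (cases "i = j")
  case False
  interpret wo_rel r using wo by (simp add: wo_rel_def)
  have "i \<in> underS j \<or> j \<in> underS i"
    using TOTALS ij False unfolding underS_def by blast
  then show ?thesis
    using stage y unfolding separation_stage_def by fastforce
qed simp

lemma separation_stage_step:
  fixes X :: "'a topology" and K :: "'k set" and B :: "'k \<Rightarrow> 'a set"
  assumes infK: "infinite K" and zd: "zero_dim X" and Hs: "Hausdorff_space X"
    and noiso: "\<forall>y\<in>topspace X. \<not> openin X {y}"
    and F: "F_kappa_space X K" and G: "G_kappa_space X K" and x: "x \<in> topspace X"
    and B: "\<And>a. a \<in> K \<Longrightarrow> clopenin X (B a) \<and> x \<in> B a"
    and a: "a \<in> K"
    and stages: "\<forall>b\<in>underS |K| a.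
      separation_stage X x (underS |K| b) (\<lambda>b. B b - (P b \<union> Q b)) h (B b) (P b) (Q b) (h b)"
  shows "\<exists>P' Q' h'.
    separation_stage X x (underS |K| a) (\<lambda>b. B b - (P b \<union> Q b)) h (B a) P' Q' h'"
proof -
  define C where "C = (\<lambda>b. B b - (P b \<union> Q b))"
  have wo: "Well_order |K|" and field: "Field |K| = K"
    by (simp_all add: card_of_well_order_on Field_card_of)
  have below: "b \<in> K" if "b \<in> underS |K| a" for b
  proof -
    have "b \<in> Field |K|"
      using that by (auto simp: underS_def Field_def)
    then show ?thesis using field by simp
  qed
  have stage: "separation_stage X x (underS |K| b) C h (B b) (P b) (Q b) (h b)"
    if "b \<in> underS |K| a" for b
    using stages that unfolding C_def by simp
  have "a \<in> Field |K|"
    using a field by simp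
  then have J: "|underS |K| a| <o |K|"
    by (rule card_of_underS[OF card_of_Card_order])
  have C_nbhd: "clopenin X (C b) \<and> x \<in> C b" if "b \<in> underS |K| a" for b
    using separation_stage_shrunk[OF stage[OF that]] B[OF below[OF that]] unfolding C_def by simp
  have cont: "continuous_map X euclideanreal (h b)" and unit: "h b y \<in> {0..1}"
    if "b \<in> underS |K| a" for b y
    using stage[OF that] unfolding separation_stage_def by simp_all
  have agree: "h i y = h j y"
    if ij: "i \<in> underS |K| a" "j \<in> underS |K| a"
      and y: "y \<in> topspace X - C i" "y \<in> topspace X - C j" for i j y
  proof (rule separation_stages_agree[OF wo _ _ _ y])
    show "i \<in> Field |K|" "j \<in> Field |K|"
      using below ij field by simp_all
    show "separation_stage X x (underS |K| b) C h (B b) (P b) (Q b) (h b)" if "b \<in> {i, j}" for b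
      using stage ij that by blast
  qed
  have Ba: "clopenin X (B a)" "x \<in> B a"
    using B[OF a] by simp_all
  from J Ba C_nbhd cont unit agree
  show ?thesis
    unfolding C_def[symmetric] by (rule separation_stage_exists[OF infK zd Hs noiso F G x])
qed

type_synonym 'a stage_data = "'a set \<times> 'a set \<times> ('a \<Rightarrow> real)"

lemma separation_construction:
  fixes X :: "'a topology" and K :: "'k set" and B :: "'k \<Rightarrow> 'a set"
  assumes infK: "infinite K" and zd: "zero_dim X" and Hs: "Hausdorff_space X"
    and noiso: "\<forall>y\<in>topspace X. \<not> openin X {y}"
    and F: "F_kappa_space X K" and G: "G_kappa_space X K" and x: "x \<in> topspace X"
    and B: "\<And>a. a \<in> K \<Longrightarrow> clopenin X (B a) \<and> x \<in> B a"
  obtains P Q h where "\<forall>a\<in>K.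
    separation_stage X x (underS |K| a) (\<lambda>b. B b - (P b \<union> Q b)) h (B a) (P a) (Q a) (h a)"
proof -
  let ?r = "|K|"
  define R where "R a T t = separation_stage X x (underS ?r a)
      (\<lambda>b. B b - (fst (T b) \<union> fst (snd (T b)))) (\<lambda>b. snd (snd (T b)))
      (B a) (fst t) (fst (snd t)) (snd (snd t))"
    for a and T :: "'k \<Rightarrow> 'a stage_data" and t
  have wo: "Well_order ?r" and field: "Field ?r = K"
    by (simp_all add: card_of_well_order_on Field_card_of)
  have "\<exists>T. \<forall>a\<in>Field ?r. R a T (T a)"
  proof (rule wellorder_dependent_choice[OF wo])
    fix a and T T' :: "'k \<Rightarrow> 'a stage_data"
    assume same: "\<forall>b\<in>underS ?r a. T b = T' b"
    show "R a T = R a T'"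
    proof
      fix t show "R a T t = R a T' t"
        unfolding R_def by (rule separation_stage_cong) (simp add: same)
    qed
  next
    fix a and T :: "'k \<Rightarrow> 'a stage_data"
    assume a: "a \<in> Field ?r" and IH: "\<forall>b\<in>underS ?r a. R b T (T b)"
    have "\<exists>P' Q' h'. separation_stage X x (underS ?r a)
        (\<lambda>b. B b - (fst (T b) \<union> fst (snd (T b)))) (\<lambda>b. snd (snd (T b))) (B a) P' Q' h'"
      using IH unfolding R_def
      by (intro separation_stage_step[OF infK zd Hs noiso F G x B]) (use a field in simp_all)
    then show "\<exists>t. R a T t"
      unfolding R_def by auto
  qed
  then obtain T where T: "\<forall>a\<in>K. R a T (T a)"
    unfolding field by blast
  then show ?thesis
    unfolding R_def by (rule that[of "\<lambda>b. fst (T b)" "\<lambda>b. fst (snd (T b))" "\<lambda>b. snd (snd (T b))"])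
qed

text \<open>Along a clopen local base at x, the functions of all stages paste to a
  [0,1]-valued continuous function on X - {x}: the complements of the shrunken
  neighbourhoods cover exactly X - {x}, and the stage functions agree on overlaps.\<close>

lemma stages_paste_on_punctured:
  fixes X :: "'a topology" and K :: "'k set" and B :: "'k \<Rightarrow> 'a set"
  assumes Hs: "Hausdorff_space X" and x: "x \<in> topspace X"
    and B: "\<And>a. a \<in> K \<Longrightarrow> clopenin X (B a) \<and> x \<in> B a"
    and base: "\<And>U. openin X U \<Longrightarrow> x \<in> U \<Longrightarrow> \<exists>a\<in>K. B a \<subseteq> U"
    and stages: "\<forall>a\<in>K.
      separation_stage X x (underS |K| a) (\<lambda>b. B b - (P b \<union> Q b)) h (B a) (P a) (Q a) (h a)"
  obtains f where "continuous_map (subtopology X (topspace X - {x})) euclideanreal f"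
    "f ` (topspace X - {x}) \<subseteq> {0..1}"
    "\<forall>a\<in>K. \<forall>y\<in>topspace X - (B a - (P a \<union> Q a)). f y = h a y"
proof -
  define C where "C = (\<lambda>b. B b - (P b \<union> Q b))"
  have stage: "separation_stage X x (underS |K| a) C h (B a) (P a) (Q a) (h a)" if "a \<in> K" for a
    using stages that unfolding C_def by simp
  have C_nbhd: "clopenin X (C a) \<and> x \<in> C a" if "a \<in> K" for a
    using separation_stage_shrunk[OF stage[OF that]] B[OF that] unfolding C_def by simp
  have wo: "Well_order |K|" and field: "Field |K| = K"
    by (simp_all add: card_of_well_order_on Field_card_of)
  have cover: "(\<Union>a\<in>K. topspace X - C a) = topspace X - {x}"
  proof
    show "(\<Union>a\<in>K. topspace X - C a) \<subseteq> topspace X - {x}"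
      using C_nbhd by blast
    show "topspace X - {x} \<subseteq> (\<Union>a\<in>K. topspace X - C a)"
    proof
      fix y assume y: "y \<in> topspace X - {x}"
      then have "openin X (topspace X - {y})"
        using closedin_t1_singleton[OF Hausdorff_imp_t1_space[OF Hs]] by blast
      then obtain a where "a \<in> K" "B a \<subseteq> topspace X - {y}"
        using base x y by blast
      then show "y \<in> (\<Union>a\<in>K. topspace X - C a)"
        using y unfolding C_def by blast
    qed
  qed
  have op: "openin X (topspace X - C a)" if "a \<in> K" for a
    using C_nbhd[OF that] openin_complement_clopen by blast
  have cont: "continuous_map X euclideanreal (h a)" and unit: "h a y \<in> {0..1}"
    if "a \<in> K" for a y
    using stage[OF that] unfolding separation_stage_def by simp_all
  have agree: "h i y = h j y"
    if ij: "i \<in> K" "j \<in> K" and y: "y \<in> topspace X - C i" "y \<in> topspace X - C j" for i j y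
  proof (rule separation_stages_agree[OF wo _ _ _ y])
    show "i \<in> Field |K|" "j \<in> Field |K|"
      using ij field by simp_all
    show "separation_stage X x (underS |K| b) C h (B b) (P b) (Q b) (h b)" if "b \<in> {i, j}" for b
      using stage ij that by blast
  qed
  obtain f where "continuous_map (subtopology X (\<Union>a\<in>K. topspace X - C a)) euclideanreal f"
    and "f ` (\<Union>a\<in>K. topspace X - C a) \<subseteq> {0..1}"
    and "\<forall>a\<in>K. \<forall>y\<in>topspace X - C a. f y = h a y"
    using op cont unit agree by (rule pasting_unit_valued)
  then show ?thesis
    unfolding cover unfolding C_def by (rule that)
qed

lemma not_Cstar_embedded_punctured:
  fixes X :: "'a topology" and K :: "'k set" and B :: "'k \<Rightarrow> 'a set"
  assumes infK: "infinite K" and zd: "zero_dim X" and Hs: "Hausdorff_space X"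
    and noiso: "\<forall>y\<in>topspace X. \<not> openin X {y}"
    and F: "F_kappa_space X K" and G: "G_kappa_space X K" and x: "x \<in> topspace X"
    and B: "\<And>a. a \<in> K \<Longrightarrow> clopenin X (B a) \<and> x \<in> B a"
    and base: "\<And>U. openin X U \<Longrightarrow> x \<in> U \<Longrightarrow> \<exists>a\<in>K. B a \<subseteq> U"
  shows "\<not> Cstar_embedded X (topspace X - {x})"
proof
  assume embedded: "Cstar_embedded X (topspace X - {x})"
  obtain P Q h where stages: "\<forall>a\<in>K.
      separation_stage X x (underS |K| a) (\<lambda>b. B b - (P b \<union> Q b)) h (B a) (P a) (Q a) (h a)"
    using B by (rule separation_construction[OF infK zd Hs noiso F G x])
  obtain f where f: "continuous_map (subtopology X (topspace X - {x})) euclideanreal f"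
    and f_unit: "f ` (topspace X - {x}) \<subseteq> {0..1}"
    and feq: "\<forall>a\<in>K. \<forall>y\<in>topspace X - (B a - (P a \<union> Q a)). f y = h a y"
    using Hs x B base stages by (rule stages_paste_on_punctured)
  have "bounded (f ` (topspace X - {x}))"
    using bounded_subset[OF bounded_closed_interval f_unit] .
  then obtain g where g: "continuous_map X euclideanreal g"
    and geq: "\<And>y. y \<in> topspace X - {x} \<Longrightarrow> g y = f y"
    using embedded[unfolded Cstar_embedded_def, rule_format, OF conjI[OF f]] by blast
  text \<open>Some B a lies in the set where g is within 1/2 of g x; but g takes the values
    0 and 1 on the nonempty sets P a and Q a inside B a.\<close>
  define V where "V = {y \<in> topspace X. g y \<in> ball (g x) (1/2)}"
  have "openin X V"
    unfolding V_def
    by (rule openin_continuous_map_preimage[OF g]) (simp add: open_openin[symmetric])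
  moreover have "x \<in> V"
    unfolding V_def using x by simp
  ultimately obtain a where a: "a \<in> K" and BV: "B a \<subseteq> V"
    using base by blast
  have stage: "separation_stage X x (underS |K| a) (\<lambda>b. B b - (P b \<union> Q b)) h
      (B a) (P a) (Q a) (h a)"
    using stages a by blast
  have near: "\<bar>g x - h a p\<bar> < 1/2" if p: "p \<in> P a \<union> Q a" for p
  proof -
    have "p \<in> V" "p \<noteq> x"
      using p stage BV unfolding separation_stage_def by auto
    then have "g p = h a p"
      using geq feq a p unfolding V_def by auto
    then show ?thesis
      using \<open>p \<in> V\<close> unfolding V_def by (simp add: dist_real_def abs_minus_commute)
  qed
  obtain p q where "p \<in> P a" "q \<in> Q a" "h a p = 0" "h a q = 1"
    using stage unfolding separation_stage_def by blast
  then show False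
    using near[of p] near[of q] by auto
qed

lemma clopen_local_base:
  assumes zd: "zero_dim X" and w: "has_weight X K" and x: "x \<in> topspace X"
  obtains B where "\<forall>a\<in>K. clopenin X (B a) \<and> x \<in> B a"
    "\<forall>V. openin X V \<and> x \<in> V \<longrightarrow> (\<exists>a\<in>K. B a \<subseteq> V)"
proof -
  obtain \<B> where base: "is_base_of X \<B>" and card: "|\<B>| =o |K|"
    using w unfolding has_weight_def by blast
  obtain enum where enum: "bij_betw enum K \<B>"
    using card_of_ordIso ordIso_symmetric[OF card] by blast
  define U where "U a = (if x \<in> enum a then enum a else topspace X)" for a
  define B where "B a = (SOME D. clopenin X D \<and> x \<in> D \<and> D \<subseteq> U a)" for a
  have B: "clopenin X (B a) \<and> x \<in> B a \<and> B a \<subseteq> U a" if "a \<in> K" for a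
  proof -
    have "enum a \<in> \<B>"
      using enum that unfolding bij_betw_def by blast
    then have "openin X (U a) \<and> x \<in> U a"
      using base x unfolding U_def is_base_of_def by auto
    then have "\<exists>D. clopenin X D \<and> x \<in> D \<and> D \<subseteq> U a"
      using zd unfolding zero_dim_def by blast
    from someI_ex[OF this] show ?thesis
      unfolding B_def .
  qed
  have "\<forall>a\<in>K. clopenin X (B a) \<and> x \<in> B a"
    using B by simp
  moreover have "\<forall>V. openin X V \<and> x \<in> V \<longrightarrow> (\<exists>a\<in>K. B a \<subseteq> V)"
  proof (intro allI impI, elim conjE)
    fix V assume V: "openin X V" "x \<in> V"
    obtain \<V> where "\<V> \<subseteq> \<B>" "\<Union>\<V> = V"
      using base V(1) unfolding is_base_of_def by blast
    then obtain a where "a \<in> K" "x \<in> enum a" "enum a \<subseteq> V"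
      using V(2) enum unfolding bij_betw_def by blast
    then show "\<exists>a\<in>K. B a \<subseteq> V"
      using B unfolding U_def by fastforce
  qed
  ultimately show ?thesis
    by (rule that)
qed

theorem corollary4p2:
  fixes X :: "'a topology" and K :: "'k set" and x :: 'a
  assumes "infinite K"
    and "kappa_eq_kappa_lt_kappa K"
    and "kappa_Parovicenko X K"
    and "has_weight X K"
    and "x \<in> topspace X"
  shows "\<not> Cstar_embedded X (topspace X - {x})"
proof -
  have zd: "zero_dim X" and Hs: "Hausdorff_space X" and F: "F_kappa_space X K"
    and G: "G_kappa_space X K" and noiso: "\<forall>y\<in>topspace X. \<not> openin X {y}"
    using assms(3) unfolding kappa_Parovicenko_def by auto
  obtain B where B: "\<forall>a\<in>K. clopenin X (B a) \<and> x \<in> B a"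
    and base: "\<forall>V. openin X V \<and> x \<in> V \<longrightarrow> (\<exists>a\<in>K. B a \<subseteq> V)"
    by (rule clopen_local_base[OF zd assms(4,5)])
  show ?thesis
    by (rule not_Cstar_embedded_punctured[where B=B, OF assms(1) zd Hs noiso F G assms(5)])
      (use B base in simp_all)
qed

end
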